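(* Let $N\ge2$, $p,q>0$ with $p+q=1$, and let $x_1\le\cdots\le x_N$ and $y_1\le\cdots\le y_N$ be integers. Let $\sigma\in\mathbb{S}_N$ and suppose that some entry $\beta$ appears in position $\beta-1$ of $\sigma$ (i.e. $\sigma(\beta-1)=\beta$) and all entries preceding $\beta$ are less than $\beta$. Then $I(\sigma)=0$, where $$I(\sigma)=\int_{\mathcal{C}_r}\cdots\int_{\mathcal{C}_r}A_\sigma\prod_{i=1}^N\xi_{\sigma(i)}^{\,x_i-y_{\sigma(i)}-1}\,d\xi_1\cdots d\xi_N$$ with $A_\sigma=\prod_{(\beta',\alpha')}S_{\beta'\alpha'}$ over all inversions $(\beta',\alpha')$ of $\sigma$, $S_{\beta'\alpha'}=-\frac{\xi_{\alpha'}}{\xi_{\beta'}}\cdot\frac{p+q\xi_{\alpha'}\xi_{\beta'}-\xi_{\beta'}}{p+q\xi_{\alpha'}\xi_{\beta'}-\xi_{\alpha'}}$ (the AZRP $S$-matrix), and $\mathcal{C}_r$ a circle centered at $0$ of sufficiently small radius $r$ that all poles of the integrand other than $0$ lie outside it.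
   Context: Permutations are in one-line notation $\sigma(1)\cdots\sigma(N)$; an inversion $(b,a)$ is a pair of entries with $b>a$ and $b$ to the left of $a$ in $\sigma$. Each $d\xi_j$ includes the factor $\frac{1}{2\pi i}$. *)

theory Defs
  imports "HOL-Complex_Analysis.Complex_Analysis"
begin

definition azrp_S :: "real \<Rightarrow> real \<Rightarrow> complex \<Rightarrow> complex \<Rightarrow> complex" where
  "azrp_S p q xb xa =
     - (xa / xb) * ((of_real p + of_real q * xa * xb - xb) / (of_real p + of_real q * xa * xb - xa))"

definition A_sigma :: "real \<Rightarrow> real \<Rightarrow> nat \<Rightarrow> (nat \<Rightarrow> nat) \<Rightarrow> (nat \<Rightarrow> complex) \<Rightarrow> complex" where
  "A_sigma p q N \<sigma> \<xi> =
     (\<Prod>(i, j) \<in> {(i, j). 1 \<le> i \<and> i < j \<and> j \<le> N \<and> \<sigma> i > \<sigma> j}.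
        azrp_S p q (\<xi> (\<sigma> i)) (\<xi> (\<sigma> j)))"

definition integrand :: "real \<Rightarrow> real \<Rightarrow> nat \<Rightarrow> (nat \<Rightarrow> int) \<Rightarrow> (nat \<Rightarrow> int) \<Rightarrow> (nat \<Rightarrow> nat)
    \<Rightarrow> (nat \<Rightarrow> complex) \<Rightarrow> complex" where
  "integrand p q N x y \<sigma> \<xi> =
     A_sigma p q N \<sigma> \<xi> * (\<Prod>i=1..N. \<xi> (\<sigma> i) powi (x i - y (\<sigma> i) - 1))"

text \<open>Iterated normalized contour integral over the circle of radius r about 0;
  the list gives the integration variables from outermost to innermost,
  each d xi including the factor 1/(2 pi i).\<close>
fun iter_cint :: "real \<Rightarrow> nat list \<Rightarrow> ((nat \<Rightarrow> complex) \<Rightarrow> complex) \<Rightarrow> (nat \<Rightarrow> complex) \<Rightarrow> complex" where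
  "iter_cint r [] F z = F z"
| "iter_cint r (j # js) F z =
     contour_integral (circlepath 0 r) (\<lambda>w. iter_cint r js F (z(j := w))) / (2 * pi * \<i>)"

definition I_sigma :: "real \<Rightarrow> real \<Rightarrow> nat \<Rightarrow> (nat \<Rightarrow> int) \<Rightarrow> (nat \<Rightarrow> int) \<Rightarrow> (nat \<Rightarrow> nat) \<Rightarrow> real \<Rightarrow> complex" where
  "I_sigma p q N x y \<sigma> r = iter_cint r (rev [1..<N+1]) (integrand p q N x y \<sigma>) (\<lambda>_. 0)"

end

theory Submission
  imports Defs
begin

text \<open>
  Let \<open>\<alpha> < \<beta>\<close> be the one value below \<open>\<beta>\<close> missing among the \<open>\<beta> - 2\<close> entries in front of \<open>\<beta>\<close>;
  it stands after \<open>\<beta>\<close>. Then \<open>(\<beta>, \<alpha>)\<close> is the only inversion containing \<open>\<beta>\<close>, and \<open>\<alpha>\<close> occurs in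
  inversions only as the smaller entry.

  The torus of integration is invariant under \<open>(\<xi> \<alpha>, \<xi> \<beta>) \<mapsto> (c * \<xi> \<alpha>, \<xi> \<beta> / c)\<close> for
  \<open>|c| = 1\<close>, so \<open>I(\<sigma>)\<close> equals its average over \<open>c = w / r\<close>, \<open>|w| = r\<close>. Integrating over \<open>w\<close>
  first, it suffices that for fixed \<open>\<xi>\<close> the rotated integrand is \<open>w\<close> times a function holomorphic
  on a disc around the circle: every factor \<open>S\<^sub>\<gamma>\<^sub>\<alpha>\<close> vanishes at \<open>w = 0\<close>, no other factor of
  \<open>A\<^sub>\<sigma>\<close> involves \<open>\<xi> \<alpha>\<close> or \<open>\<xi> \<beta>\<close>, and the monomial contributes the power
  \<open>(x i\<alpha> - y \<alpha>) - (x (\<beta> - 1) - y \<beta>) \<ge> 0\<close> of \<open>w\<close>, where \<open>\<sigma> i\<alpha> = \<alpha>\<close>; this is where the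
  monotonicity of \<open>x\<close> and \<open>y\<close> enters. Cauchy's theorem then makes the \<open>w\<close>-integral vanish.
\<close>

section \<open>Iterated contour integrals over a torus\<close>

definition torus :: "real \<Rightarrow> nat set \<Rightarrow> (nat \<Rightarrow> complex) set" where
  "torus r A = {\<xi>. \<forall>i\<in>A. cmod (\<xi> i) = r}"

definition counter_rotate :: "nat \<Rightarrow> nat \<Rightarrow> complex \<Rightarrow> (nat \<Rightarrow> complex) \<Rightarrow> nat \<Rightarrow> complex" where
  "counter_rotate \<alpha> \<beta> c \<xi> = \<xi>(\<alpha> := c * \<xi> \<alpha>, \<beta> := \<xi> \<beta> / c)"

lemma contour_integral_divide_const:
  "contour_integral g (\<lambda>w. f w / c) = contour_integral g f / c"
  by (simp add: contour_integral_integral)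

lemma iter_cint_divide_const:
  "iter_cint r js (\<lambda>\<xi>. H \<xi> / c) z = iter_cint r js H z / c"
  by (induction js arbitrary: z) (simp_all add: contour_integral_divide_const)

lemma iter_cint_append:
  "iter_cint r (xs @ ys) H z = iter_cint r xs (iter_cint r ys H) z"
  by (induction xs arbitrary: z) simp_all

lemma iter_cint_fun_upd_ignored:
  assumes "\<And>\<xi> v. H (\<xi>(k := v)) = H \<xi>"
  shows "iter_cint r js H (z(k := v)) = iter_cint r js H z"
proof (induction js arbitrary: z)
  case Nil
  then show ?case using assms by (simp only: iter_cint.simps)
next
  case (Cons j js)
  show ?case
  proof (cases "j = k")
    case True
    then show ?thesis by (simp only: iter_cint.simps fun_upd_upd)
  next
    case False
    then have "\<And>w. iter_cint r js H ((z(k := v))(j := w)) = iter_cint r js H (z(j := w))"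
      using Cons.IH by (metis fun_upd_twist)
    then show ?thesis by (simp only: iter_cint.simps)
  qed
qed

lemma iter_cint_freeze:
  assumes "k \<notin> set js"
  shows "iter_cint r js (\<lambda>\<xi>. K (\<xi> k) \<xi>) z = iter_cint r js (K (z k)) z"
  using assms by (induction js arbitrary: z) simp_all

lemma iter_cint_fun_upd_outside:
  assumes "k \<notin> set js"
  shows "iter_cint r js (\<lambda>\<xi>. H (\<xi>(k := \<phi> (\<xi> k)))) z = iter_cint r js H (z(k := \<phi> (z k)))"
  using assms
proof (induction js arbitrary: z)
  case (Cons j js)
  then have "k \<notin> set js" "\<And>w. (z(j := w))(k := \<phi> ((z(j := w)) k)) = (z(k := \<phi> (z k)))(j := w)"
    by (auto simp: fun_upd_twist)
  then show ?case
    using Cons.IH[OF \<open>k \<notin> set js\<close>] by (simp only: iter_cint.simps)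
qed simp

lemma has_contour_integral_circlepath_rotate:
  assumes c: "cmod c = 1" and f: "(f has_contour_integral i) (circlepath 0 r)"
  shows "((\<lambda>w. f (c * w)) has_contour_integral (i / c)) (circlepath 0 r)"
proof -
  have "c \<noteq> 0"
    using c by auto
  define a where "a = Arg2pi c / (2 * pi)"
  have a: "a \<in> {0..1}"
    using Arg2pi_ge_0[of c] Arg2pi_lt_2pi[of c] by (auto simp: a_def field_simps)
  have c_exp: "exp (2 * of_real pi * \<i> * of_real a) = c"
    using Arg2pi_eq[of c] c by (simp add: a_def field_simps)
  have "shiftpath a (circlepath 0 r) = (\<lambda>t. c * circlepath 0 r t)"
  proof
    fix t
    have "exp (2 * of_real pi * \<i> * of_real (a + t)) = c * exp (2 * of_real pi * \<i> * of_real t)"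
      by (simp add: c_exp[symmetric] exp_add[symmetric] algebra_simps)
    moreover have "exp (2 * of_real pi * \<i> * of_real (a + t - 1)) = exp (2 * of_real pi * \<i> * of_real (a + t))"
      by (simp add: algebra_simps exp_diff)
    ultimately show "shiftpath a (circlepath 0 r) t = c * circlepath 0 r t"
      by (auto simp: shiftpath_def circlepath)
  qed
  then have "(f has_contour_integral i) (\<lambda>t. c * circlepath 0 r t)"
    using has_contour_integral_shiftpath[OF f valid_path_circlepath a] by simp
  moreover have "vector_derivative (\<lambda>t. c * circlepath 0 r t) (at t) = c * vector_derivative (circlepath 0 r) (at t)" for t
    by (metis vector_derivative_at has_vector_derivative_mult_right has_vector_derivative_circlepath
        vector_derivative_circlepath)
  ultimately have "((\<lambda>t. f (c * circlepath 0 r t) * (c * vector_derivative (circlepath 0 r) (at t))) has_integral i) {0..1}"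
    by (simp add: has_contour_integral)
  then have "((\<lambda>t. f (c * circlepath 0 r t) * (c * vector_derivative (circlepath 0 r) (at t)) / c) has_integral i / c) {0..1}"
    by (rule has_integral_divide)
  then show ?thesis
    using \<open>c \<noteq> 0\<close> by (simp add: has_contour_integral)
qed

lemma contour_integral_circlepath_rotate:
  assumes c: "cmod c = 1"
  shows "contour_integral (circlepath 0 r) (\<lambda>w. f (c * w)) = contour_integral (circlepath 0 r) f / c"
proof (cases "f contour_integrable_on circlepath 0 r")
  case True
  then show ?thesis
    using has_contour_integral_circlepath_rotate[OF c] contour_integral_unique has_contour_integral_integral
    by blast
next
  case False
  have "cmod (inverse c) = 1" "c \<noteq> 0"
    using c by (auto simp: norm_inverse)
  then have "\<not> (\<lambda>w. f (c * w)) contour_integrable_on circlepath 0 r"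
    using False has_contour_integral_circlepath_rotate[of "inverse c" "\<lambda>w. f (c * w)"]
    by (auto simp: contour_integrable_on_def mult.assoc[symmetric])
  with False show ?thesis
    by (simp add: not_integrable_contour_integral)
qed

lemma iter_cint_rotate:
  assumes "distinct js" "j \<in> set js" "cmod c = 1"
  shows "iter_cint r js (\<lambda>\<xi>. H (\<xi>(j := c * \<xi> j))) z = iter_cint r js H z / c"
  using assms(1,2)
proof (induction js arbitrary: z)
  case (Cons k js)
  show ?case
  proof (cases "k = j")
    case True
    then have "j \<notin> set js"
      using Cons.prems by auto
    then have "iter_cint r (k # js) (\<lambda>\<xi>. H (\<xi>(j := c * \<xi> j))) z
       = contour_integral (circlepath 0 r) (\<lambda>w. iter_cint r js H (z(j := c * w))) / (2 * pi * \<i>)"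
      using True iter_cint_fun_upd_outside[where \<phi> = "\<lambda>v. c * v"] by simp
    also have "\<dots> = iter_cint r (k # js) H z / c"
      using True contour_integral_circlepath_rotate[OF assms(3), where f = "\<lambda>w. iter_cint r js H (z(j := w))"]
      by simp
    finally show ?thesis .
  next
    case False
    with Cons show ?thesis
      by (simp add: contour_integral_divide_const)
  qed
qed simp

lemma iter_cint_counter_rotate:
  assumes "distinct js" "\<alpha> \<in> set js" "\<beta> \<in> set js" "\<alpha> \<noteq> \<beta>" "cmod c = 1"
  shows "iter_cint r js (\<lambda>\<xi>. F (counter_rotate \<alpha> \<beta> c \<xi>)) z = iter_cint r js F z"
proof -
  have "c \<noteq> 0" "cmod (inverse c) = 1"
    using assms(5) by (auto simp: norm_inverse)
  have "counter_rotate \<alpha> \<beta> c \<xi> = (\<xi>(\<beta> := inverse c * \<xi> \<beta>))(\<alpha> := c * (\<xi>(\<beta> := inverse c * \<xi> \<beta>)) \<alpha>)" for \<xi>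
    using assms(4) by (simp add: counter_rotate_def fun_upd_twist field_simps)
  then have "iter_cint r js (\<lambda>\<xi>. F (counter_rotate \<alpha> \<beta> c \<xi>)) z
      = iter_cint r js (\<lambda>\<xi>. F (\<xi>(\<alpha> := c * \<xi> \<alpha>))) z / inverse c"
    using iter_cint_rotate[OF assms(1,3) \<open>cmod (inverse c) = 1\<close>, where H = "\<lambda>\<xi>. F (\<xi>(\<alpha> := c * \<xi> \<alpha>))"]
    by simp
  also have "\<dots> = iter_cint r js F z"
    using iter_cint_rotate[OF assms(1,2,5)] \<open>c \<noteq> 0\<close> by simp
  finally show ?thesis .
qed

lemma iter_cint_eq_0:
  assumes "r > 0" "z \<in> torus r B" "\<And>\<xi>. \<xi> \<in> torus r (B \<union> set js) \<Longrightarrow> H \<xi> = 0"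
  shows "iter_cint r js H z = 0"
  using assms(2,3)
proof (induction js arbitrary: B z)
  case (Cons j js)
  have "iter_cint r js H (z(j := w)) = 0" if "w \<in> path_image (circlepath 0 r)" for w
    using Cons.IH[where B = "insert j B"] Cons.prems that assms(1) by (auto simp: torus_def)
  then have "contour_integral (circlepath 0 r) (\<lambda>w. iter_cint r js H (z(j := w))) = 0"
    by (rule contour_integral_eq_0)
  then show ?case
    by simp
qed simp

lemma continuous_on_coordinate: "continuous_on S (\<lambda>\<xi>::nat \<Rightarrow> complex. \<xi> i)"
  by (rule continuous_on_subset[OF continuous_on_product_coordinates]) auto

lemma continuous_on_fun_upd:
  assumes "continuous_on S f" "continuous_on S g"
  shows "continuous_on S (\<lambda>s. (f s :: nat \<Rightarrow> complex)(j := g s))"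
proof (rule continuous_on_coordinatewise_then_product)
  fix i
  show "continuous_on S (\<lambda>s. ((f s)(j := g s)) i)"
    using assms continuous_on_product_then_coordinatewise[OF assms(1), of i] by (cases "i = j") auto
qed

lemma continuous_on_counter_rotate:
  assumes "\<And>\<xi>. \<xi> \<in> S \<Longrightarrow> \<xi> k \<noteq> 0" "r \<noteq> 0"
  shows "continuous_on S (\<lambda>\<xi>. counter_rotate \<alpha> \<beta> (\<xi> k / r) \<xi>)"
proof -
  have "continuous_on S (\<lambda>\<xi>. \<xi> k / r * \<xi> \<alpha>)" "continuous_on S (\<lambda>\<xi>. \<xi> \<beta> / (\<xi> k / r))"
    using assms by (auto intro!: continuous_intros continuous_on_coordinate)
  then show ?thesis
    unfolding counter_rotate_def by (intro continuous_on_fun_upd continuous_on_id)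
qed

lemma continuous_on_iter_cint:
  assumes "r > 0" "continuous_on (torus r A) H"
  shows "continuous_on (torus r (A - set js)) (iter_cint r js H)"
proof (induction js)
  case Nil
  then show ?case using assms(2) by simp
next
  case (Cons j js)
  let ?g = "circlepath 0 r"
  let ?T = "torus r (A - set (j # js))"
  have "continuous_on (?T \<times> cbox 0 1) (\<lambda>s. (fst s)(j := ?g (snd s)))"
    by (intro continuous_on_fun_upd continuous_intros
        continuous_on_compose2[OF path_circlepath[unfolded path_def]]) auto
  moreover have "(\<lambda>s. (fst s)(j := ?g (snd s))) ` (?T \<times> cbox 0 1) \<subseteq> torus r (A - set js)"
    using assms(1) by (auto simp: torus_def norm_mult circlepath)
  ultimately have "continuous_on (?T \<times> cbox 0 1) (\<lambda>s. iter_cint r js H ((fst s)(j := ?g (snd s))))"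
    by (rule continuous_on_compose2[OF Cons])
  then have "continuous_on (?T \<times> cbox 0 1)
      (\<lambda>(z, t). iter_cint r js H (z(j := ?g t)) * vector_derivative ?g (at t))"
    unfolding vector_derivative_circlepath case_prod_unfold by (intro continuous_intros) auto
  then have "continuous_on ?T (\<lambda>z. integral (cbox 0 1)
      (\<lambda>t. iter_cint r js H (z(j := ?g t)) * vector_derivative ?g (at t)) / (2 * pi * \<i>))"
    by (intro continuous_on_divide continuous_on_const integral_continuous_on_param) auto
  then show ?case
    by (simp add: contour_integral_integral)
qed

lemma iter_cint_Cons_eq_snoc:
  assumes r: "r > 0" and "distinct (j # js)" and H: "continuous_on (torus r A) H"
    and "z \<in> torus r (A - set (j # js))"
  shows "iter_cint r (j # js) H z = iter_cint r (js @ [j]) H z"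
  using assms(2,4)
proof (induction js arbitrary: z)
  case (Cons k js)
  let ?g = "circlepath 0 r"
  define f where "f = (\<lambda>w v. iter_cint r js H ((z(j := w))(k := v)) / (2 * pi * \<i>))"
  have "j \<noteq> k"
    using Cons.prems by auto
  have "continuous_on (path_image ?g \<times> path_image ?g) (\<lambda>s. (z(j := fst s))(k := snd s))"
    by (intro continuous_on_fun_upd continuous_intros)
  moreover have "(\<lambda>s. (z(j := fst s))(k := snd s)) ` (path_image ?g \<times> path_image ?g) \<subseteq> torus r (A - set js)"
    using r Cons.prems(2) by (auto simp: torus_def)
  ultimately have "continuous_on (path_image ?g \<times> path_image ?g) (\<lambda>s. iter_cint r js H ((z(j := fst s))(k := snd s)))"
    by (rule continuous_on_compose2[OF continuous_on_iter_cint[OF r H]])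
  then have f_cont: "continuous_on (path_image ?g \<times> path_image ?g) (\<lambda>(w, v). f w v)"
    unfolding f_def case_prod_unfold by (intro continuous_intros) auto
  have "iter_cint r (j # k # js) H z = contour_integral ?g (\<lambda>w. contour_integral ?g (f w)) / (2 * pi * \<i>)"
    by (simp add: f_def contour_integral_divide_const)
  also have "\<dots> = contour_integral ?g (\<lambda>v. contour_integral ?g (\<lambda>w. f w v)) / (2 * pi * \<i>)"
    by (subst contour_integral_swap[OF f_cont]) (auto simp: vector_derivative_circlepath intro!: continuous_intros)
  also have "\<dots> = contour_integral ?g (\<lambda>v. iter_cint r (j # js) H (z(k := v))) / (2 * pi * \<i>)"
    using \<open>j \<noteq> k\<close> by (simp add: f_def contour_integral_divide_const fun_upd_twist)
  also have "\<dots> = contour_integral ?g (\<lambda>v. iter_cint r (js @ [j]) H (z(k := v))) / (2 * pi * \<i>)"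
    using Cons r by (intro arg_cong2[where f = "(/)"] contour_integral_eq refl) (auto simp: torus_def)
  also have "\<dots> = iter_cint r ((k # js) @ [j]) H z"
    by simp
  finally show ?case .
qed simp

lemma counter_rotate_fun_upd:
  assumes "k \<noteq> \<alpha>" "k \<noteq> \<beta>"
  shows "counter_rotate \<alpha> \<beta> c (\<xi>(k := w)) = (counter_rotate \<alpha> \<beta> c \<xi>)(k := w)"
  using assms by (simp add: counter_rotate_def fun_upd_twist)

lemma continuous_on_average_counter_rotate:
  assumes r: "r > 0" and F: "continuous_on (torus r A) F"
  shows "continuous_on (torus r (insert k A)) (\<lambda>\<xi>. F (counter_rotate \<alpha> \<beta> (\<xi> k / r) \<xi>) / \<xi> k)"
proof -
  let ?T = "torus r (insert k A)"
  have nz: "\<xi> k \<noteq> 0" if "\<xi> \<in> ?T" for \<xi>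
    using that r by (auto simp: torus_def)
  have "continuous_on ?T (\<lambda>\<xi>. counter_rotate \<alpha> \<beta> (\<xi> k / r) \<xi>)"
    using nz r by (intro continuous_on_counter_rotate) auto
  moreover have "(\<lambda>\<xi>. counter_rotate \<alpha> \<beta> (\<xi> k / r) \<xi>) ` ?T \<subseteq> torus r A"
    using r by (auto simp: torus_def counter_rotate_def norm_mult norm_divide)
  ultimately have "continuous_on ?T (\<lambda>\<xi>. F (counter_rotate \<alpha> \<beta> (\<xi> k / r) \<xi>))"
    by (rule continuous_on_compose2[OF F])
  then show ?thesis
    using nz by (intro continuous_on_divide continuous_on_coordinate) auto
qed

lemma iter_cint_average_counter_rotate:
  assumes r: "r > 0" and js: "distinct js" "k \<notin> set js"
    and \<alpha>\<beta>: "\<alpha> \<in> set js" "\<beta> \<in> set js" "\<alpha> \<noteq> \<beta>"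
    and F_k: "\<And>\<xi> v. F (\<xi>(k := v)) = F \<xi>"
  shows "iter_cint r (k # js) (\<lambda>\<xi>. F (counter_rotate \<alpha> \<beta> (\<xi> k / r) \<xi>) / \<xi> k) z = iter_cint r js F z"
proof -
  let ?g = "circlepath 0 r"
  let ?G = "\<lambda>\<xi> :: nat \<Rightarrow> complex. F (counter_rotate \<alpha> \<beta> (\<xi> k / r) \<xi>) / \<xi> k"
  have inner: "iter_cint r js ?G (z(k := w)) = iter_cint r js F z / w" if "cmod w = r" for w
  proof -
    have "iter_cint r js ?G (z(k := w)) = iter_cint r js (\<lambda>\<xi>. F (counter_rotate \<alpha> \<beta> (w / r) \<xi>)) (z(k := w)) / w"
      using iter_cint_freeze[OF js(2), where K = "\<lambda>v \<xi>. F (counter_rotate \<alpha> \<beta> (v / r) \<xi>) / v"]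
      by (simp add: iter_cint_divide_const)
    also have "\<dots> = iter_cint r js F (z(k := w)) / w"
      using iter_cint_counter_rotate[OF js(1) \<alpha>\<beta>, of "w / r"] that r by (simp add: norm_divide)
    also have "\<dots> = iter_cint r js F z / w"
      using iter_cint_fun_upd_ignored[of F k] F_k by metis
    finally show ?thesis .
  qed
  have "iter_cint r (k # js) ?G z = contour_integral ?g (\<lambda>w. iter_cint r js ?G (z(k := w))) / (2 * pi * \<i>)"
    by simp
  also have "\<dots> = contour_integral ?g (\<lambda>w. iter_cint r js F z / (w - 0)) / (2 * pi * \<i>)"
    by (intro arg_cong2[where f = "(/)"] contour_integral_eq refl) (use r inner in auto)
  also have "\<dots> = iter_cint r js F z"
    using Cauchy_integral_circlepath_simple[of "\<lambda>_. iter_cint r js F z" 0 r 0] r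
    by (simp add: contour_integral_unique)
  finally show ?thesis .
qed

text \<open>The fresh variable \<open>\<xi> k\<close> parametrises the rotations \<open>c = \<xi> k / r\<close>, which leave the
  torus invariant; integrating over it innermost leaves the contour integrals of the last hypothesis.\<close>

lemma iter_cint_eq_0_by_counter_rotation:
  assumes r: "r > 0" and js: "distinct js" "k \<notin> set js"
    and \<alpha>\<beta>: "\<alpha> \<in> set js" "\<beta> \<in> set js" "\<alpha> \<noteq> \<beta>"
    and F_k: "\<And>\<xi> v. F (\<xi>(k := v)) = F \<xi>"
    and F_cont: "continuous_on (torus r (set js)) F"
    and F_avg: "\<And>\<xi>. \<xi> \<in> torus r (set js) \<Longrightarrow>
      contour_integral (circlepath 0 r) (\<lambda>w. F (counter_rotate \<alpha> \<beta> (w / r) \<xi>) / w) = 0"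
  shows "iter_cint r js F z = 0"
proof -
  define G where "G = (\<lambda>\<xi> :: nat \<Rightarrow> complex. F (counter_rotate \<alpha> \<beta> (\<xi> k / r) \<xi>) / \<xi> k)"
  have "k \<noteq> \<alpha>" "k \<noteq> \<beta>"
    using js \<alpha>\<beta> by auto
  then have G_upd: "G (\<xi>(k := w)) = F (counter_rotate \<alpha> \<beta> (w / r) \<xi>) / w" for \<xi> w
    by (simp add: G_def F_k counter_rotate_fun_upd)
  have "iter_cint r js F z = iter_cint r (k # js) G z"
    unfolding G_def by (rule iter_cint_average_counter_rotate[OF r js \<alpha>\<beta> F_k, symmetric])
  also have "\<dots> = iter_cint r (js @ [k]) G z"
    unfolding G_def
    by (rule iter_cint_Cons_eq_snoc[OF r _ continuous_on_average_counter_rotate[OF r F_cont]])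
      (use js in \<open>auto simp: torus_def\<close>)
  also have "\<dots> = iter_cint r js (iter_cint r [k] G) z"
    by (rule iter_cint_append)
  also have "\<dots> = 0"
  proof (rule iter_cint_eq_0[OF r, where B = "{}"])
    fix \<xi> assume "\<xi> \<in> torus r ({} \<union> set js)"
    then show "iter_cint r [k] G \<xi> = 0"
      using F_avg[of \<xi>] by (simp add: G_upd)
  qed (simp add: torus_def)
  finally show ?thesis .
qed

section \<open>Multiples of powers on a circle\<close>

text \<open>Any radius larger than \<open>r\<close> would do in place of \<open>2 * r\<close>.\<close>

definition power_multiple_on_circle :: "real \<Rightarrow> int \<Rightarrow> (complex \<Rightarrow> complex) \<Rightarrow> bool" where
  "power_multiple_on_circle r k f \<longleftrightarrow>
     (\<exists>h. h holomorphic_on ball 0 (2 * r) \<and> (\<forall>w. cmod w = r \<longrightarrow> f w = w powi k * h w))"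

lemma power_multiple_on_circle_const: "power_multiple_on_circle r 0 (\<lambda>w. c)"
  unfolding power_multiple_on_circle_def by (rule exI[of _ "\<lambda>w. c"]) auto

lemma power_multiple_on_circle_mult:
  assumes "r > 0" "power_multiple_on_circle r k f" "power_multiple_on_circle r l g"
  shows "power_multiple_on_circle r (k + l) (\<lambda>w. f w * g w)"
proof -
  obtain h1 h2 where h: "h1 holomorphic_on ball 0 (2 * r)" "h2 holomorphic_on ball 0 (2 * r)"
    "\<forall>w. cmod w = r \<longrightarrow> f w = w powi k * h1 w" "\<forall>w. cmod w = r \<longrightarrow> g w = w powi l * h2 w"
    using assms(2,3) by (auto simp: power_multiple_on_circle_def)
  have "f w * g w = w powi (k + l) * (h1 w * h2 w)" if "cmod w = r" for w
    using h that assms(1) by (auto simp: power_int_add)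
  then show ?thesis
    unfolding power_multiple_on_circle_def using h(1,2) by (blast intro: holomorphic_intros)
qed

lemma power_multiple_on_circle_prod:
  assumes "r > 0" "finite S" "\<And>i. i \<in> S \<Longrightarrow> power_multiple_on_circle r (k i) (f i)"
  shows "power_multiple_on_circle r (\<Sum>i\<in>S. k i) (\<lambda>w. \<Prod>i\<in>S. f i w)"
  using assms(2,3)
proof (induction S rule: finite_induct)
  case empty
  then show ?case using power_multiple_on_circle_const[of r 1] by simp
next
  case (insert i S)
  then show ?case
    using power_multiple_on_circle_mult[OF assms(1), of "k i" "f i"] by simp
qed

lemma power_multiple_on_circle_mono:
  assumes "power_multiple_on_circle r k f" "l \<le> k" "r > 0"
  shows "power_multiple_on_circle r l f"
proof -
  obtain h where h: "h holomorphic_on ball 0 (2 * r)" "\<forall>w. cmod w = r \<longrightarrow> f w = w powi k * h w"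
    using assms(1) by (auto simp: power_multiple_on_circle_def)
  have "f w = w powi l * (w ^ nat (k - l) * h w)" if "cmod w = r" for w
  proof -
    have "w powi k = w powi l * w powi (k - l)"
      using power_int_add[of w l "k - l"] assms(3) that by auto
    then show ?thesis
      using h that assms(2) by (simp add: power_int_def)
  qed
  moreover have "(\<lambda>w. w ^ nat (k - l) * h w) holomorphic_on ball 0 (2 * r)"
    using h by (intro holomorphic_intros)
  ultimately show ?thesis
    unfolding power_multiple_on_circle_def by blast
qed

lemma power_multiple_on_circle_contour_integral_eq_0:
  assumes "r > 0" "power_multiple_on_circle r 1 f"
  shows "contour_integral (circlepath 0 r) (\<lambda>w. f w / w) = 0"
proof -
  obtain h where h: "h holomorphic_on ball 0 (2 * r)" "\<forall>w. cmod w = r \<longrightarrow> f w = w * h w"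
    using assms(2) by (auto simp: power_multiple_on_circle_def)
  have "contour_integral (circlepath 0 r) (\<lambda>w. f w / w) = contour_integral (circlepath 0 r) h"
    using h assms(1) by (intro contour_integral_eq) auto
  also have "\<dots> = 0"
    using assms(1) by (intro contour_integral_unique Cauchy_theorem_disc_simple[OF h(1)]) auto
  finally show ?thesis .
qed

lemma counter_rotate_powi_power_multiple:
  assumes "\<alpha> \<noteq> \<beta>"
  shows "power_multiple_on_circle r (if a = \<alpha> then e else if a = \<beta> then - e else 0)
    (\<lambda>w. counter_rotate \<alpha> \<beta> (w / r) \<xi> a powi e)"
proof -
  consider "a = \<alpha>" | "a = \<beta>" | "a \<noteq> \<alpha>" "a \<noteq> \<beta>"
    by blast
  then show ?thesis
  proof cases
    case 1
    then have "counter_rotate \<alpha> \<beta> (w / r) \<xi> a powi e = w powi e * (\<xi> \<alpha> / r) powi e" for w :: complex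
      using assms by (simp add: counter_rotate_def power_int_mult_distrib[symmetric])
    then show ?thesis
      using 1 unfolding power_multiple_on_circle_def by (intro exI[of _ "\<lambda>_. (\<xi> \<alpha> / r) powi e"]) auto
  next
    case 2
    then have "counter_rotate \<alpha> \<beta> (w / r) \<xi> a powi e = w powi (- e) * (\<xi> \<beta> * r) powi e" for w :: complex
      using assms by (simp add: counter_rotate_def power_int_divide_distrib power_int_minus field_simps)
    then show ?thesis
      using 2 assms unfolding power_multiple_on_circle_def by (intro exI[of _ "\<lambda>_. (\<xi> \<beta> * r) powi e"]) auto
  next
    case 3
    then show ?thesis
      using power_multiple_on_circle_const by (simp add: counter_rotate_def)
  qed
qed

section \<open>The S-matrix on a small circle\<close>

lemma of_real_add_neq_0:
  assumes "cmod z < p"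
  shows "of_real p + z \<noteq> 0"
proof
  assume "of_real p + z = 0"
  then have "z = - of_real p"
    by (simp add: add_eq_0_iff)
  with assms show False
    by simp
qed

lemma azrp_S_counter_rotated_eq:
  fixes u a b :: complex
  assumes "u \<noteq> 0"
  shows "azrp_S p q (b / u) (u * a)
    = u * (- (a / b) * ((p * u + q * a * b * u - b) / (of_real p + q * a * b - u * a)))"
proof -
  have "of_real q * (u * a) * (b / u) = q * a * b" "u * a / (b / u) = u * u * a / b"
    "of_real p + q * a * b - b / u = (p * u + q * a * b * u - b) / u"
    using assms by (simp_all add: field_simps)
  moreover have "- (u * u * a / b) * ((N / u) / D) = u * (- (a / b) * (N / D))" for N D
    using assms by (simp add: field_simps)
  ultimately show ?thesis
    by (simp add: azrp_S_def)
qed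

text \<open>The bound \<open>5 * r < p\<close> keeps the denominators of the S-matrix away from \<open>0\<close> on the
  disc of radius \<open>2 * r\<close> where the rotated integrand has to be holomorphic.\<close>

locale small_circle =
  fixes p q r :: real
  assumes p: "p > 0" and q: "q > 0" and pq: "p + q = 1" and r: "r > 0" and rp: "5 * r < p"
begin

lemma qr_le_1: "q * r \<le> 1"
  using p q r pq rp by (intro mult_le_one) auto

lemma azrp_S_counter_rotated_power_multiple:
  assumes a: "cmod a = r" and b: "cmod b = r"
  shows "power_multiple_on_circle r 1 (\<lambda>w. azrp_S p q (b / (w / r)) (w / r * a))"
proof -
  define h where "h w = - (a / (b * r)) * ((p * (w / r) + q * a * b * (w / r) - b) / (p + q * a * b - w / r * a))"
    for w :: complex
  have den: "of_real p + (q * a * b - w / r * a) \<noteq> 0" if "cmod w < 2 * r" for w :: complex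
  proof (rule of_real_add_neq_0)
    have "cmod (q * a * b - w / r * a) \<le> q * r * r + cmod w"
      using norm_triangle_ineq4[of "q * a * b" "w / r * a"] a b r q by (simp add: norm_mult norm_divide)
    also have "\<dots> < p"
      using that qr_le_1 r rp mult_right_mono[of "q * r" 1 r] by linarith
    finally show "cmod (q * a * b - w / r * a) < p" .
  qed
  have "azrp_S p q (b / (w / r)) (w / r * a) = w powi 1 * h w" if "cmod w = r" for w
    using that r azrp_S_counter_rotated_eq[where u = "w / r" and a = a and b = b] by (auto simp: h_def)
  moreover have "h holomorphic_on ball 0 (2 * r)"
    unfolding h_def using den by (intro holomorphic_intros) (auto simp: add_diff_eq)
  ultimately show ?thesis
    unfolding power_multiple_on_circle_def by blast
qed

lemma azrp_S_rotated_second_power_multiple: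
  assumes a: "cmod a = r" and d: "cmod d = r"
  shows "power_multiple_on_circle r 1 (\<lambda>w. azrp_S p q d (w / r * a))"
proof -
  define h where "h w = - (a / r / d) * ((p + q * (w / r * a) * d - d) / (p + (q * (w / r * a) * d - w / r * a)))"
    for w :: complex
  have den: "of_real p + (q * (w / r * a) * d - w / r * a) \<noteq> 0" if "cmod w < 2 * r" for w :: complex
  proof (rule of_real_add_neq_0)
    have "cmod (q * (w / r * a) * d - w / r * a) \<le> q * r * cmod w + cmod w"
      using norm_triangle_ineq4[of "q * (w / r * a) * d" "w / r * a"] a d r q
      by (simp add: norm_mult norm_divide mult_ac)
    also have "\<dots> \<le> 2 * cmod w"
      using qr_le_1 mult_right_mono[of "q * r" 1 "cmod w"] by simp
    also have "\<dots> < p"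
      using that r rp by linarith
    finally show "cmod (q * (w / r * a) * d - w / r * a) < p" .
  qed
  have "azrp_S p q d (w / r * a) = w powi 1 * h w" for w :: complex
  proof -
    have "w / r * a / d = w * (a / r / d)"
      by simp
    then show ?thesis
      unfolding azrp_S_def h_def by (simp add: diff_diff_eq2 add_diff_eq)
  qed
  moreover have "h holomorphic_on ball 0 (2 * r)"
    unfolding h_def using den by (intro holomorphic_intros) auto
  ultimately show ?thesis
    unfolding power_multiple_on_circle_def by (intro exI[of _ h]) simp
qed

lemma azrp_S_counter_rotate_power_multiple:
  assumes "\<alpha> \<noteq> \<beta>" "a \<noteq> \<alpha>" "b \<noteq> \<beta>" "a = \<beta> \<Longrightarrow> b = \<alpha>" "cmod (\<xi> a) = r" "cmod (\<xi> b) = r"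
  shows "power_multiple_on_circle r (if b = \<alpha> then 1 else 0)
    (\<lambda>w. azrp_S p q (counter_rotate \<alpha> \<beta> (w / r) \<xi> a) (counter_rotate \<alpha> \<beta> (w / r) \<xi> b))"
proof -
  consider "b = \<alpha>" "a = \<beta>" | "b = \<alpha>" "a \<noteq> \<beta>" | "b \<noteq> \<alpha>"
    by blast
  then show ?thesis
  proof cases
    case 1
    then show ?thesis
      using azrp_S_counter_rotated_power_multiple[of "\<xi> \<alpha>" "\<xi> \<beta>"] assms by (simp add: counter_rotate_def)
  next
    case 2
    then show ?thesis
      using azrp_S_rotated_second_power_multiple[of "\<xi> \<alpha>" "\<xi> a"] assms by (simp add: counter_rotate_def)
  next
    case 3
    with assms(4) have "a \<noteq> \<beta>"
      by blast
    with 3 show ?thesis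
      using power_multiple_on_circle_const assms by (simp add: counter_rotate_def)
  qed
qed

lemma azrp_S_denominator_neq_0:
  assumes "cmod a = r" "cmod b = r"
  shows "of_real p + of_real q * a * b - a \<noteq> 0"
proof -
  have "cmod (of_real q * a * b - a) \<le> q * r * r + r"
    using norm_triangle_ineq4[of "of_real q * a * b" a] assms q by (simp add: norm_mult)
  also have "\<dots> < p"
    using qr_le_1 r rp mult_right_mono[of "q * r" 1 r] by linarith
  finally show ?thesis
    using of_real_add_neq_0 by (metis add_diff_eq)
qed

lemma continuous_on_azrp_S:
  assumes "a \<in> A" "b \<in> A"
  shows "continuous_on (torus r A) (\<lambda>\<xi>. azrp_S p q (\<xi> a) (\<xi> b))"
proof -
  have "\<xi> a \<noteq> 0" "of_real p + of_real q * \<xi> b * \<xi> a - \<xi> b \<noteq> 0" if "\<xi> \<in> torus r A" for \<xi>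
    using that assms r azrp_S_denominator_neq_0[of "\<xi> b" "\<xi> a"] by (auto simp: torus_def)
  then show ?thesis
    unfolding azrp_S_def by (auto intro!: continuous_intros continuous_on_coordinate)
qed

end

section \<open>Inversions of a permutation with an adjacent pattern\<close>

definition inversions :: "nat \<Rightarrow> (nat \<Rightarrow> nat) \<Rightarrow> (nat \<times> nat) set" where
  "inversions N \<sigma> = {(i, j). 1 \<le> i \<and> i < j \<and> j \<le> N \<and> \<sigma> i > \<sigma> j}"

lemma inversions_subset: "inversions N \<sigma> \<subseteq> {1..N} \<times> {1..N}"
  by (auto simp: inversions_def)

lemma finite_inversions: "finite (inversions N \<sigma>)"
  using finite_subset[OF inversions_subset] by blast

lemma integrand_eq:
  "integrand p q N x y \<sigma> \<xi> = (\<Prod>(i, j)\<in>inversions N \<sigma>. azrp_S p q (\<xi> (\<sigma> i)) (\<xi> (\<sigma> j)))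
     * (\<Prod>i=1..N. \<xi> (\<sigma> i) powi (x i - y (\<sigma> i) - 1))"
  by (simp add: integrand_def A_sigma_def inversions_def)

lemma integrand_cong:
  assumes "\<sigma> permutes {1..N}" "\<And>i. i \<in> {1..N} \<Longrightarrow> \<xi> i = \<xi>' i"
  shows "integrand p q N x y \<sigma> \<xi> = integrand p q N x y \<sigma> \<xi>'"
proof -
  have \<sigma>: "\<sigma> i \<in> {1..N}" if "i \<in> {1..N}" for i
    using that permutes_in_image[OF assms(1)] by blast
  have "(\<Prod>(i, j)\<in>inversions N \<sigma>. azrp_S p q (\<xi> (\<sigma> i)) (\<xi> (\<sigma> j)))
      = (\<Prod>(i, j)\<in>inversions N \<sigma>. azrp_S p q (\<xi>' (\<sigma> i)) (\<xi>' (\<sigma> j)))"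
    using \<sigma> assms(2) by (intro prod.cong) (auto simp: inversions_def)
  moreover have "(\<Prod>i=1..N. \<xi> (\<sigma> i) powi (x i - y (\<sigma> i) - 1)) = (\<Prod>i=1..N. \<xi>' (\<sigma> i) powi (x i - y (\<sigma> i) - 1))"
    using \<sigma> assms(2) by (intro prod.cong) auto
  ultimately show ?thesis
    by (simp only: integrand_eq)
qed

text \<open>The \<open>\<beta> - 2\<close> entries before position \<open>\<beta> - 1\<close> are distinct values below \<open>\<beta>\<close>, so exactly
  one value below \<open>\<beta>\<close> is left for the positions after \<open>\<beta> - 1\<close>.\<close>

lemma unique_smaller_entry_after:
  fixes \<sigma> :: "nat \<Rightarrow> nat"
  assumes perm: "\<sigma> permutes {1..N}" and \<beta>: "2 \<le> \<beta>" "\<beta> \<le> N" "\<sigma> (\<beta> - 1) = \<beta>"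
    and before: "\<forall>i. 1 \<le> i \<and> i < \<beta> - 1 \<longrightarrow> \<sigma> i < \<beta>"
  obtains i\<alpha> where "\<beta> - 1 < i\<alpha>" "i\<alpha> \<le> N" "\<sigma> i\<alpha> < \<beta>"
    "\<forall>j. j \<le> N \<and> \<beta> - 1 < j \<and> \<sigma> j < \<beta> \<longrightarrow> j = i\<alpha>"
proof -
  have inj: "inj \<sigma>"
    using permutes_inj[OF perm] .
  have img: "\<sigma> i \<in> {1..N} \<longleftrightarrow> i \<in> {1..N}" for i
    using permutes_in_image[OF perm] .
  have "\<sigma> ` {1..\<beta> - 2} \<subseteq> {1..\<beta> - 1}"
    using before img \<beta> by force
  then have "card ({1..\<beta> - 1} - \<sigma> ` {1..\<beta> - 2}) = 1"
    using card_image[OF inj_on_subset[OF inj subset_UNIV]] \<beta> by (simp add: card_Diff_subset)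
  then obtain \<alpha> where \<alpha>: "{1..\<beta> - 1} - \<sigma> ` {1..\<beta> - 2} = {\<alpha>}"
    using card_1_singletonE by blast
  obtain i\<alpha> where i\<alpha>: "\<sigma> i\<alpha> = \<alpha>"
    using permutes_surj[OF perm] by (metis surjD)
  have "\<alpha> \<in> {1..\<beta> - 1}" "\<alpha> \<notin> \<sigma> ` {1..\<beta> - 2}"
    using \<alpha> by blast+
  then have "i\<alpha> \<in> {1..N}" "i\<alpha> \<notin> {1..\<beta> - 2}" "i\<alpha> \<noteq> \<beta> - 1"
    using i\<alpha> img[of i\<alpha>] \<beta> by auto
  then have "\<beta> - 1 < i\<alpha>" "i\<alpha> \<le> N" "\<sigma> i\<alpha> < \<beta>"
    using i\<alpha> \<open>\<alpha> \<in> {1..\<beta> - 1}\<close> by auto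
  moreover have "\<forall>j. j \<le> N \<and> \<beta> - 1 < j \<and> \<sigma> j < \<beta> \<longrightarrow> j = i\<alpha>"
  proof (intro allI impI)
    fix j assume j: "j \<le> N \<and> \<beta> - 1 < j \<and> \<sigma> j < \<beta>"
    then have "\<sigma> j \<in> {1..\<beta> - 1}"
      using img[of j] by auto
    moreover have "\<sigma> j \<notin> \<sigma> ` {1..\<beta> - 2}"
      using j by (auto simp: inj_image_mem_iff[OF inj])
    ultimately have "\<sigma> j = \<sigma> i\<alpha>"
      using \<alpha> i\<alpha> by blast
    then show "j = i\<alpha>"
      using injD[OF inj] by metis
  qed
  ultimately show ?thesis
    by (rule that)
qed

lemma adjacent_pattern_inversions:
  fixes \<sigma> :: "nat \<Rightarrow> nat"
  assumes perm: "\<sigma> permutes {1..N}" and \<beta>: "2 \<le> \<beta>" "\<beta> \<le> N" "\<sigma> (\<beta> - 1) = \<beta>"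
    and before: "\<forall>i. 1 \<le> i \<and> i < \<beta> - 1 \<longrightarrow> \<sigma> i < \<beta>"
  obtains i\<alpha> \<alpha> where "\<sigma> i\<alpha> = \<alpha>" "(\<beta> - 1, i\<alpha>) \<in> inversions N \<sigma>"
    "\<forall>(i, j) \<in> inversions N \<sigma>. \<sigma> i \<noteq> \<alpha> \<and> \<sigma> j \<noteq> \<beta> \<and> (\<sigma> i = \<beta> \<longrightarrow> \<sigma> j = \<alpha>)"
proof -
  have inj: "inj \<sigma>"
    using permutes_inj[OF perm] .
  obtain i\<alpha> where i\<alpha>: "\<beta> - 1 < i\<alpha>" "i\<alpha> \<le> N" "\<sigma> i\<alpha> < \<beta>"
    and unique: "\<forall>j. j \<le> N \<and> \<beta> - 1 < j \<and> \<sigma> j < \<beta> \<longrightarrow> j = i\<alpha>"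
    by (rule unique_smaller_entry_after[OF perm \<beta> before])
  have inv: "(\<beta> - 1, i\<alpha>) \<in> inversions N \<sigma>"
    using \<beta> i\<alpha> by (auto simp: inversions_def)
  have "\<sigma> i \<noteq> \<sigma> i\<alpha> \<and> \<sigma> j \<noteq> \<beta> \<and> (\<sigma> i = \<beta> \<longrightarrow> j = i\<alpha>)" if ij: "(i, j) \<in> inversions N \<sigma>" for i j
  proof (intro conjI impI notI)
    assume "\<sigma> i = \<sigma> i\<alpha>"
    then have "i = i\<alpha>"
      using injD[OF inj] by metis
    moreover have "j = i\<alpha>"
      using ij i\<alpha> \<open>\<sigma> i = \<sigma> i\<alpha>\<close> \<open>i = i\<alpha>\<close> by (intro unique[rule_format]) (auto simp: inversions_def)
    ultimately show False
      using ij by (simp add: inversions_def)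
  next
    assume "\<sigma> j = \<beta>"
    then have "j = \<beta> - 1"
      using \<beta>(3) injD[OF inj] by metis
    with ij before \<open>\<sigma> j = \<beta>\<close> show False
      by (auto simp: inversions_def)
  next
    assume "\<sigma> i = \<beta>"
    then have "i = \<beta> - 1"
      using \<beta>(3) injD[OF inj] by metis
    with ij \<open>\<sigma> i = \<beta>\<close> show "j = i\<alpha>"
      by (intro unique[rule_format]) (auto simp: inversions_def)
  qed
  then show ?thesis
    by (intro that[OF refl inv]) auto
qed

lemma sum_signed_preimages:
  fixes e :: "nat \<Rightarrow> 'a :: ab_group_add"
  assumes "inj \<sigma>" "\<sigma> i\<alpha> = \<alpha>" "\<sigma> i\<beta> = \<beta>" "\<alpha> \<noteq> \<beta>" "i\<alpha> \<in> A" "i\<beta> \<in> A" "finite A"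
  shows "(\<Sum>i\<in>A. if \<sigma> i = \<alpha> then e i else if \<sigma> i = \<beta> then - e i else 0) = e i\<alpha> - e i\<beta>"
proof -
  have "(\<Sum>i\<in>A. if \<sigma> i = \<alpha> then e i else if \<sigma> i = \<beta> then - e i else 0)
      = (\<Sum>i\<in>A. (if i = i\<alpha> then e i else 0) - (if i = i\<beta> then e i else 0))"
    using assms injD[OF assms(1)] by (intro sum.cong) auto
  then show ?thesis
    using assms(5-7) by (simp add: sum_subtractf)
qed

context small_circle
begin

lemma continuous_on_integrand:
  assumes "\<sigma> permutes {1..N}"
  shows "continuous_on (torus r {1..N}) (integrand p q N x y \<sigma>)"
proof -
  have \<sigma>: "\<sigma> i \<in> {1..N}" if "i \<in> {1..N}" for i
    using that permutes_in_image[OF assms] by blast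
  have "\<xi> (\<sigma> i) \<noteq> 0" if "\<xi> \<in> torus r {1..N}" "i \<in> {1..N}" for \<xi> i
    using that \<sigma> r by (force simp: torus_def)
  then have "continuous_on (torus r {1..N}) (\<lambda>\<xi>. (\<Prod>(i, j)\<in>inversions N \<sigma>. azrp_S p q (\<xi> (\<sigma> i)) (\<xi> (\<sigma> j)))
      * (\<Prod>i=1..N. \<xi> (\<sigma> i) powi (x i - y (\<sigma> i) - 1)))"
    using \<sigma> inversions_subset[of N \<sigma>]
    by (intro continuous_on_mult continuous_on_prod continuous_on_power_int continuous_on_coordinate)
      (auto simp: case_prod_unfold intro!: continuous_on_azrp_S)
  then show ?thesis
    by (simp only: integrand_eq[abs_def])
qed

lemma inversion_factors_counter_rotate_power_multiple:
  assumes perm: "\<sigma> permutes {1..N}" and "\<alpha> \<noteq> \<beta>"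
    and only: "\<forall>(i, j) \<in> inversions N \<sigma>. \<sigma> i \<noteq> \<alpha> \<and> \<sigma> j \<noteq> \<beta> \<and> (\<sigma> i = \<beta> \<longrightarrow> \<sigma> j = \<alpha>)"
    and \<xi>: "\<xi> \<in> torus r {1..N}"
  shows "power_multiple_on_circle r (\<Sum>(i, j)\<in>inversions N \<sigma>. if \<sigma> j = \<alpha> then 1 else 0)
    (\<lambda>w. \<Prod>(i, j)\<in>inversions N \<sigma>.
      azrp_S p q (counter_rotate \<alpha> \<beta> (w / r) \<xi> (\<sigma> i)) (counter_rotate \<alpha> \<beta> (w / r) \<xi> (\<sigma> j)))"
proof (rule power_multiple_on_circle_prod[OF r finite_inversions], clarify)
  fix i j assume ij: "(i, j) \<in> inversions N \<sigma>"
  then have "\<sigma> i \<noteq> \<alpha>" "\<sigma> j \<noteq> \<beta>" "\<sigma> i = \<beta> \<Longrightarrow> \<sigma> j = \<alpha>"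
    using only by auto
  moreover have "\<sigma> i \<in> {1..N}" "\<sigma> j \<in> {1..N}"
    using ij permutes_in_image[OF perm, of i] permutes_in_image[OF perm, of j] by (auto simp: inversions_def)
  ultimately show "power_multiple_on_circle r (if \<sigma> j = \<alpha> then 1 else 0)
      (\<lambda>w. azrp_S p q (counter_rotate \<alpha> \<beta> (w / r) \<xi> (\<sigma> i)) (counter_rotate \<alpha> \<beta> (w / r) \<xi> (\<sigma> j)))"
    using \<xi> \<open>\<alpha> \<noteq> \<beta>\<close> by (intro azrp_S_counter_rotate_power_multiple) (auto simp: torus_def)
qed

lemma integrand_counter_rotate_power_multiple:
  assumes perm: "\<sigma> permutes {1..N}"
    and inv: "(i\<beta>, i\<alpha>) \<in> inversions N \<sigma>" "\<sigma> i\<alpha> = \<alpha>" "\<sigma> i\<beta> = \<beta>"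
    and only: "\<forall>(i, j) \<in> inversions N \<sigma>. \<sigma> i \<noteq> \<alpha> \<and> \<sigma> j \<noteq> \<beta> \<and> (\<sigma> i = \<beta> \<longrightarrow> \<sigma> j = \<alpha>)"
    and xy: "x i\<beta> - y \<beta> \<le> x i\<alpha> - y \<alpha>"
    and \<xi>: "\<xi> \<in> torus r {1..N}"
  shows "power_multiple_on_circle r 1 (\<lambda>w. integrand p q N x y \<sigma> (counter_rotate \<alpha> \<beta> (w / r) \<xi>))"
proof -
  define e where "e i = x i - y (\<sigma> i) - 1" for i
  let ?\<xi> = "\<lambda>w :: complex. counter_rotate \<alpha> \<beta> (w / r) \<xi>"
  have inj: "inj \<sigma>"
    using permutes_inj[OF perm] .
  have "\<alpha> \<noteq> \<beta>" "i\<alpha> \<in> {1..N}" "i\<beta> \<in> {1..N}"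
    using inv by (auto simp: inversions_def)
  have "power_multiple_on_circle r (\<Sum>(i, j)\<in>inversions N \<sigma>. if \<sigma> j = \<alpha> then 1 else 0)
      (\<lambda>w. \<Prod>(i, j)\<in>inversions N \<sigma>. azrp_S p q (?\<xi> w (\<sigma> i)) (?\<xi> w (\<sigma> j)))"
    by (rule inversion_factors_counter_rotate_power_multiple[OF perm \<open>\<alpha> \<noteq> \<beta>\<close> only \<xi>])
  moreover have "power_multiple_on_circle r (\<Sum>i=1..N. if \<sigma> i = \<alpha> then e i else if \<sigma> i = \<beta> then - e i else 0)
      (\<lambda>w. \<Prod>i=1..N. ?\<xi> w (\<sigma> i) powi e i)"
    using \<open>\<alpha> \<noteq> \<beta>\<close>
    by (intro power_multiple_on_circle_prod[OF r] counter_rotate_powi_power_multiple) auto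
  moreover have "1 \<le> (\<Sum>(i, j)\<in>inversions N \<sigma>. if \<sigma> j = \<alpha> then 1 else 0 :: int)"
  proof -
    have "(\<lambda>(i, j). if \<sigma> j = \<alpha> then 1 else 0 :: int) (i\<beta>, i\<alpha>)
        \<le> (\<Sum>(i, j)\<in>inversions N \<sigma>. if \<sigma> j = \<alpha> then 1 else 0)"
      by (rule member_le_sum[OF inv(1)]) (auto simp: finite_inversions split: if_splits)
    then show ?thesis
      using inv(2) by simp
  qed
  moreover have "(\<Sum>i=1..N. if \<sigma> i = \<alpha> then e i else if \<sigma> i = \<beta> then - e i else 0) = e i\<alpha> - e i\<beta>"
    using \<open>\<alpha> \<noteq> \<beta>\<close> \<open>i\<alpha> \<in> {1..N}\<close> \<open>i\<beta> \<in> {1..N}\<close>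
    by (intro sum_signed_preimages[OF inj inv(2,3)]) auto
  moreover have "e i\<beta> \<le> e i\<alpha>"
    using xy inv by (simp add: e_def)
  ultimately have "power_multiple_on_circle r 1
      (\<lambda>w. (\<Prod>(i, j)\<in>inversions N \<sigma>. azrp_S p q (?\<xi> w (\<sigma> i)) (?\<xi> w (\<sigma> j))) * (\<Prod>i=1..N. ?\<xi> w (\<sigma> i) powi e i))"
    using power_multiple_on_circle_mult[OF r] power_multiple_on_circle_mono r by fastforce
  then show ?thesis
    by (simp only: integrand_eq e_def)
qed

lemma I_sigma_eq_0:
  assumes perm: "\<sigma> permutes {1..N}"
    and inv: "(i\<beta>, i\<alpha>) \<in> inversions N \<sigma>" "\<sigma> i\<alpha> = \<alpha>" "\<sigma> i\<beta> = \<beta>"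
    and only: "\<forall>(i, j) \<in> inversions N \<sigma>. \<sigma> i \<noteq> \<alpha> \<and> \<sigma> j \<noteq> \<beta> \<and> (\<sigma> i = \<beta> \<longrightarrow> \<sigma> j = \<alpha>)"
    and xy: "x i\<beta> - y \<beta> \<le> x i\<alpha> - y \<alpha>"
  shows "I_sigma p q N x y \<sigma> r = 0"
proof -
  have js: "distinct (rev [1..<N + 1])" "set (rev [1..<N + 1]) = {1..N}"
    by auto
  show ?thesis
    unfolding I_sigma_def
  proof (rule iter_cint_eq_0_by_counter_rotation[OF r js(1), where k = 0, unfolded js(2)])
    show "0 \<notin> {1..N}"
      by simp
    have "i\<alpha> \<in> {1..N}" "i\<beta> \<in> {1..N}" "\<sigma> i\<beta> > \<sigma> i\<alpha>"
      using inv(1) by (auto simp: inversions_def)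
    then show "\<alpha> \<in> {1..N}" "\<beta> \<in> {1..N}" "\<alpha> \<noteq> \<beta>"
      using inv(2,3) permutes_in_image[OF perm, of i\<alpha>] permutes_in_image[OF perm, of i\<beta>] by auto
    show "integrand p q N x y \<sigma> (\<xi>(0 := v)) = integrand p q N x y \<sigma> \<xi>" for \<xi> v
      by (rule integrand_cong[OF perm]) simp
    show "continuous_on (torus r {1..N}) (integrand p q N x y \<sigma>)"
      by (rule continuous_on_integrand[OF perm])
    show "contour_integral (circlepath 0 r) (\<lambda>w. integrand p q N x y \<sigma> (counter_rotate \<alpha> \<beta> (w / r) \<xi>) / w) = 0"
      if "\<xi> \<in> torus r {1..N}" for \<xi>
      by (rule power_multiple_on_circle_contour_integral_eq_0[OF r
            integrand_counter_rotate_power_multiple[OF perm inv only xy that]])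
  qed
qed

end

theorem lemma3p3:
  fixes N :: nat and p q :: real and x y :: "nat \<Rightarrow> int" and \<sigma> :: "nat \<Rightarrow> nat"
  assumes "N \<ge> 2"
    and "p > 0" and "q > 0" and "p + q = 1"
    and "\<And>i j. 1 \<le> i \<Longrightarrow> i \<le> j \<Longrightarrow> j \<le> N \<Longrightarrow> x i \<le> x j"
    and "\<And>i j. 1 \<le> i \<Longrightarrow> i \<le> j \<Longrightarrow> j \<le> N \<Longrightarrow> y i \<le> y j"
    and "\<sigma> permutes {1..N}"
    and "\<exists>\<beta>. 2 \<le> \<beta> \<and> \<beta> \<le> N \<and> \<sigma> (\<beta> - 1) = \<beta> \<and> (\<forall>i. 1 \<le> i \<and> i < \<beta> - 1 \<longrightarrow> \<sigma> i < \<beta>)"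
  shows "\<exists>r0>0. \<forall>r. 0 < r \<and> r < r0 \<longrightarrow> I_sigma p q N x y \<sigma> r = 0"
proof -
  obtain \<beta> where \<beta>: "2 \<le> \<beta>" "\<beta> \<le> N" "\<sigma> (\<beta> - 1) = \<beta>"
    and before: "\<forall>i. 1 \<le> i \<and> i < \<beta> - 1 \<longrightarrow> \<sigma> i < \<beta>"
    using assms(8) by blast
  obtain i\<alpha> \<alpha> where \<alpha>: "\<sigma> i\<alpha> = \<alpha>" and inv: "(\<beta> - 1, i\<alpha>) \<in> inversions N \<sigma>"
    and only: "\<forall>(i, j) \<in> inversions N \<sigma>. \<sigma> i \<noteq> \<alpha> \<and> \<sigma> j \<noteq> \<beta> \<and> (\<sigma> i = \<beta> \<longrightarrow> \<sigma> j = \<alpha>)"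
    by (rule adjacent_pattern_inversions[OF assms(7) \<beta> before])
  have "1 \<le> \<alpha>" "\<alpha> \<le> \<beta>" "\<beta> - 1 \<le> i\<alpha>" "i\<alpha> \<le> N"
    using inv \<alpha> \<beta> permutes_in_image[OF assms(7), of i\<alpha>] by (auto simp: inversions_def)
  then have xy: "x (\<beta> - 1) - y \<beta> \<le> x i\<alpha> - y \<alpha>"
    using assms(5)[of "\<beta> - 1" i\<alpha>] assms(6)[of \<alpha> \<beta>] \<beta> by fastforce
  have "I_sigma p q N x y \<sigma> r = 0" if "0 < r" "r < p / 5" for r
  proof -
    interpret small_circle p q r
      using assms(2-4) that by unfold_locales auto
    show ?thesis
      using I_sigma_eq_0[OF assms(7) inv \<alpha> \<beta>(3) only xy] .
  qed
  then show ?thesis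
    using assms(2) by (intro exI[of _ "p / 5"]) auto
qed

end
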